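(* In the lower-bound instance for CTS-G described in the context, for any round $t>T/2$ and any sub-optimal base arm $a\in B_t$, we have $\Pr(w_{a,t}\ge\tau\mid\mathcal{F}_{t-1})\ge0.15$, where $\tau:=\Delta+\Delta/4$.
   Context: Top-$m$ instance: $N$ base arms with $N\ge400m$, $m\ge1$; every round any $m$ of the $N$ arms may be played. A set $G\subset[N]$ with $|G|=m$ is fixed; rewards are deterministic: $r_a=\Delta$ for $a\in G$ and $r_a=0$ otherwise, with $\Delta:=\frac45\sqrt{\frac{N\ln T}{T}}$ and $T>\frac{16}{25}N\ln T$. The agent runs CTS-G with $\gamma=1$: in round $t$ draw independently $w_{a,t}\sim\mathcal{N}\big(\hat r_{a,n_{a,t}},\frac{m\ln t}{n_{a,t}+1}\big)$ and play the $m$ arms with largest $w_{a,t}$; $n_{a,t}$ is the number of plays of $a$ in rounds $1,\dots,t-1$, $\hat r_{a,n_{a,t}}$ its empirical mean ($0$ if unplayed). $\mathcal{F}_{t-1}$ is the history up to the end of round $t-1$. $L:=\frac{16m\ln(T/2)}{25\Delta^2}-1$ and $B_t:=\{a\in[N]\setminus G: n_{a,t}\le L\}$. *)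

theory Defs
  imports "HOL-Probability.Probability"
begin

text \<open>A history of plays: hist s is the set of base arms played in round s (rounds start at 1).
  Arms are {0..<N}.\<close>

definition n_plays :: "(nat \<Rightarrow> nat set) \<Rightarrow> nat \<Rightarrow> nat \<Rightarrow> nat" where
  "n_plays hist a t = card {s \<in> {1..<t}. a \<in> hist s}"

text \<open>Empirical mean of arm a from the rewards observed in rounds 1..t-1; rewards are
  deterministic, the observed reward of arm a is always r a. Zero if unplayed.\<close>
definition emp_mean :: "(nat \<Rightarrow> real) \<Rightarrow> (nat \<Rightarrow> nat set) \<Rightarrow> nat \<Rightarrow> nat \<Rightarrow> real" where
  "emp_mean r hist a t =
     (if n_plays hist a t = 0 then 0
      else (\<Sum>s\<in>{s \<in> {1..<t}. a \<in> hist s}. r a) / real (n_plays hist a t))"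

text \<open>CTS-G with gamma = 1: conditional law of the sample w_{a,t} given F_{t-1},
  i.e. N(hat r_{a,n_{a,t}}, m ln t / (n_{a,t}+1)) (second parameter of normal_density is the
  standard deviation).\<close>
definition ctsg_sample_law :: "nat \<Rightarrow> (nat \<Rightarrow> real) \<Rightarrow> (nat \<Rightarrow> nat set) \<Rightarrow> nat \<Rightarrow> nat \<Rightarrow> real measure" where
  "ctsg_sample_law m r hist a t =
     density lborel (normal_density (emp_mean r hist a t)
        (sqrt (real m * ln (real t) / (real (n_plays hist a t) + 1))))"

end

theory Submission
  imports Defs
begin

text \<open>Since \<open>a \<notin> G\<close> its empirical mean is 0, so \<open>w\<^sub>a\<^sub>,\<^sub>t\<close> is centred Gaussian with
  variance \<open>\<sigma>\<^sup>2 = m ln t / (n\<^sub>a\<^sub>,\<^sub>t + 1)\<close>. The bound \<open>n\<^sub>a\<^sub>,\<^sub>t \<le> L\<close> together with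
  \<open>t > T/2\<close> gives \<open>\<tau> \<le> \<sigma>\<close>, so it suffices that a centred Gaussian exceeds one standard
  deviation with probability at least 0.15. By symmetry \<open>[0,\<infinity>)\<close> has mass at least 1/2, and
  bounding \<open>exp (-u)\<close> by \<open>1 - u + u\<^sup>2/2\<close> shows that \<open>[0,\<sigma>]\<close> has mass at most
  \<open>103 / (120 sqrt (2\<pi>)) < 0.35\<close>.\<close>

lemma exp_minus_le_taylor_2:
  fixes y :: real
  assumes "0 \<le> y"
  shows "exp (- y) \<le> 1 - y + y\<^sup>2 / 2"
proof -
  let ?h = "\<lambda>y::real. exp y * (1 - y + y\<^sup>2 / 2)"
  have "?h 0 \<le> ?h y"
  proof (rule DERIV_nonneg_imp_nondecreasing[OF assms])
    fix x :: real
    show "\<exists>d. (?h has_real_derivative d) (at x) \<and> 0 \<le> d"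
    proof (intro exI conjI)
      show "(?h has_real_derivative exp x * x\<^sup>2 / 2) (at x)"
        by (auto intro!: derivative_eq_intros simp: power2_eq_square algebra_simps)
    qed simp
  qed
  then have "exp (- y) * 1 \<le> exp (- y) * ?h y"
    by (intro mult_left_mono) auto
  then show ?thesis
    by (simp add: exp_minus field_simps)
qed

lemma normal_density_0_le_taylor:
  fixes \<sigma> x :: real
  shows "normal_density 0 \<sigma> x \<le> (1 - x\<^sup>2 / (2 * \<sigma>\<^sup>2) + x ^ 4 / (8 * \<sigma> ^ 4)) / sqrt (2 * pi * \<sigma>\<^sup>2)"
proof -
  have "exp (- (x\<^sup>2 / (2 * \<sigma>\<^sup>2))) \<le> 1 - x\<^sup>2 / (2 * \<sigma>\<^sup>2) + (x\<^sup>2 / (2 * \<sigma>\<^sup>2))\<^sup>2 / 2"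
    by (rule exp_minus_le_taylor_2) simp
  also have "\<dots> = 1 - x\<^sup>2 / (2 * \<sigma>\<^sup>2) + x ^ 4 / (8 * \<sigma> ^ 4)"
    by (simp add: power2_eq_square power_numeral_reduce)
  finally show ?thesis
    unfolding normal_density_def by (simp add: divide_right_mono)
qed

lemma measure_normal_density_eq_set_integral:
  assumes "A \<in> sets borel"
  shows "measure (density lborel (normal_density \<mu> \<sigma>)) A = (LBINT x:A. normal_density \<mu> \<sigma> x)"
proof -
  have "measure (density lborel (normal_density \<mu> \<sigma>)) A
      = integral\<^sup>L (density lborel (normal_density \<mu> \<sigma>)) (indicator A)"
    by simp
  also have "\<dots> = integral\<^sup>L lborel (\<lambda>x. normal_density \<mu> \<sigma> x *\<^sub>R indicator A x)"
    using assms by (intro integral_density) auto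
  finally show ?thesis
    by (simp add: set_lebesgue_integral_def mult.commute)
qed

lemma set_integral_normal_density_0_sigma_le:
  fixes \<sigma> :: real
  assumes "0 < \<sigma>"
  shows "(LBINT x:{0..\<sigma>}. normal_density 0 \<sigma> x) \<le> 103 / (120 * sqrt (2 * pi))"
proof -
  define p where "p x = (1 - x\<^sup>2 / (2 * \<sigma>\<^sup>2) + x ^ 4 / (8 * \<sigma> ^ 4)) / sqrt (2 * pi * \<sigma>\<^sup>2)" for x
  define P where "P x = (x - x ^ 3 / (6 * \<sigma>\<^sup>2) + x ^ 5 / (40 * \<sigma> ^ 4)) / sqrt (2 * pi * \<sigma>\<^sup>2)" for x
  have p_cont: "continuous_on {0..\<sigma>} p"
    unfolding p_def using assms by (intro continuous_intros) auto
  have "(LBINT x:{0..\<sigma>}. normal_density 0 \<sigma> x) \<le> (LBINT x:{0..\<sigma>}. p x)"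
  proof (rule set_integral_mono)
    show "set_integrable lborel {0..\<sigma>} (normal_density 0 \<sigma>)"
      unfolding set_integrable_def using assms by (intro integrable_mult_indicator) auto
    show "set_integrable lborel {0..\<sigma>} p"
      using p_cont by (rule borel_integrable_atLeastAtMost')
  qed (simp add: p_def normal_density_0_le_taylor)
  also have "\<dots> = P \<sigma> - P 0"
    unfolding set_lebesgue_integral_def
  proof (rule integral_FTC_atLeastAtMost[OF less_imp_le[OF assms] _ p_cont])
    fix x
    have "(P has_real_derivative p x) (at x)"
      unfolding P_def p_def using assms
      by (auto intro!: derivative_eq_intros simp: field_simps power2_eq_square power_numeral_reduce)
    then show "(P has_vector_derivative p x) (at x within {0..\<sigma>})"
      by (simp add: has_real_derivative_iff_has_vector_derivative has_vector_derivative_at_within)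
  qed
  also have "\<dots> = 103 / (120 * sqrt (2 * pi))"
    unfolding P_def using assms by (simp add: real_sqrt_mult field_simps power_numeral_reduce)
  finally show ?thesis .
qed

lemma measure_normal_density_atLeast_0_ge_half:
  fixes \<sigma> :: real
  assumes "0 < \<sigma>"
  shows "measure (density lborel (normal_density 0 \<sigma>)) {0..} \<ge> 1 / 2"
proof -
  let ?N = "density lborel (normal_density 0 \<sigma>)"
  interpret prob_space ?N
    using assms by (rule prob_space_normal_density)
  have reflect: "normal_density 0 \<sigma> (- x) = normal_density 0 \<sigma> x" for x
    by (simp add: normal_density_def)
  have "measure ?N {..<0} = (LBINT x:{..<0}. normal_density 0 \<sigma> x)"
    by (rule measure_normal_density_eq_set_integral) simp
  also have "\<dots> = (LBINT x:{x. - x \<in> {..<0}}. normal_density 0 \<sigma> (- x))"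
    by (rule set_integral_reflect)
  also have "\<dots> = (LBINT x:{0<..}. normal_density 0 \<sigma> x)"
    by (simp only: reflect) (simp add: greaterThan_def)
  also have "\<dots> = measure ?N {0<..}"
    by (rule measure_normal_density_eq_set_integral[symmetric]) simp
  also have "\<dots> \<le> measure ?N {0..}"
    by (intro finite_measure_mono) auto
  finally have "measure ?N {..<0} \<le> measure ?N {0..}" .
  moreover have "measure ?N {..<0} = 1 - measure ?N {0..}"
    using prob_compl[of "{0..}"] by (simp add: Compl_eq_Diff_UNIV[symmetric] Compl_atLeast)
  ultimately show ?thesis
    by linarith
qed

lemma measure_normal_density_atLeast_ge:
  fixes \<sigma> \<tau> :: real
  assumes "0 < \<sigma>" and "\<tau> \<le> \<sigma>"
  shows "measure (density lborel (normal_density 0 \<sigma>)) {\<tau>..} \<ge> 0.15"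
proof -
  let ?N = "density lborel (normal_density 0 \<sigma>)"
  interpret prob_space ?N
    using assms(1) by (rule prob_space_normal_density)
  have "(2.4524::real)\<^sup>2 \<le> 2 * pi"
    using pi_approx by (simp add: power2_eq_square)
  then have "2.4524 \<le> sqrt (2 * pi)"
    by (rule real_le_rsqrt)
  then have "103 / (120 * sqrt (2 * pi)) \<le> (7 / 20 :: real)"
    by (simp add: field_simps)
  then have "measure ?N {0..\<sigma>} \<le> 7 / 20"
    using set_integral_normal_density_0_sigma_le[OF assms(1)]
    by (simp add: measure_normal_density_eq_set_integral)
  moreover have "{0..} - {0..\<sigma>} = {\<sigma><..}"
    using assms(1) by auto
  then have "measure ?N {\<sigma><..} = measure ?N {0..} - measure ?N {0..\<sigma>}"
    using finite_measure_Diff[of "{0..}" "{0..\<sigma>}"] by simp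
  moreover have "measure ?N {\<sigma><..} \<le> measure ?N {\<tau>..}"
    using assms(2) by (intro finite_measure_mono) auto
  ultimately have "3 / 20 \<le> measure ?N {\<tau>..}"
    using measure_normal_density_atLeast_0_ge_half[OF assms(1)] by linarith
  then show ?thesis
    by simp
qed

lemma sq_le_div_succ_if_le_div_sq_minus_one:
  fixes n c x :: real
  assumes "0 \<le> n" and "n \<le> c / x\<^sup>2 - 1"
  shows "0 < c" and "x\<^sup>2 \<le> c / (n + 1)"
proof -
  have "1 \<le> c / x\<^sup>2"
    using assms by linarith
  then have "x\<^sup>2 \<noteq> 0" and "0 < c"
    using divide_nonpos_nonneg[of c "x\<^sup>2"] by fastforce+
  moreover have "n + 1 \<le> c / x\<^sup>2"
    using assms(2) by linarith
  ultimately have "(n + 1) * x\<^sup>2 \<le> c"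
    by (simp add: pos_le_divide_eq)
  then show "x\<^sup>2 \<le> c / (n + 1)"
    using assms(1) by (simp add: le_divide_eq mult.commute)
  show "0 < c" by fact
qed

lemma ctsg_sample_law_zero_reward:
  assumes "r a = 0"
  shows "ctsg_sample_law m r hist a t
    = density lborel (normal_density 0 (sqrt (real m * ln (real t) / (real (n_plays hist a t) + 1))))"
  using assms by (simp add: ctsg_sample_law_def emp_mean_def)

theorem lemma10:
  fixes N m T t a :: nat and G :: "nat set" and hist :: "nat \<Rightarrow> nat set"
    and \<Delta> L \<tau> :: real and r :: "nat \<Rightarrow> real"
  assumes "m \<ge> 1" and "N \<ge> 400 * m"
    and "G \<subseteq> {..<N}" and "card G = m"
    and "real T > 16 / 25 * real N * ln (real T)"
    and "\<Delta> = 4 / 5 * sqrt (real N * ln (real T) / real T)"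
    and "r = (\<lambda>b. if b \<in> G then \<Delta> else 0)"
    and "L = 16 * real m * ln (real T / 2) / (25 * \<Delta>\<^sup>2) - 1"
    and "\<And>s. hist s \<subseteq> {..<N} \<and> card (hist s) = m"
    and "real t > real T / 2" and "t \<le> T"
    and "a \<in> {..<N} - G" and "real (n_plays hist a t) \<le> L"
    and "\<tau> = \<Delta> + \<Delta> / 4"
  shows "measure (ctsg_sample_law m r hist a t) {\<tau>..} \<ge> 0.15"
proof -
  define n where "n = real (n_plays hist a t)"
  define \<sigma> where "\<sigma> = sqrt (real m * ln (real t) / (n + 1))"
  have "16 * real m * ln (real T / 2) / (25 * \<Delta>\<^sup>2) = real m * ln (real T / 2) / \<tau>\<^sup>2"
    unfolding assms(14) by (simp add: power2_eq_square)
  then have "n \<le> real m * ln (real T / 2) / \<tau>\<^sup>2 - 1"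
    using assms(8,13) by (simp add: n_def)
  then have ln_T_half: "0 < real m * ln (real T / 2)" and \<tau>_sq: "\<tau>\<^sup>2 \<le> real m * ln (real T / 2) / (n + 1)"
    using sq_le_div_succ_if_le_div_sq_minus_one[of n] by (simp_all add: n_def)
  have "0 < ln (real T / 2)"
    using ln_T_half assms(1) by (simp add: zero_less_mult_iff)
  moreover have "0 < real T"
    using calculation by (cases "T = 0") auto
  ultimately have "ln (real T / 2) \<le> ln (real t)" and "0 < ln (real t)"
    using assms(10) by auto
  then have "0 < \<sigma>" and "\<tau>\<^sup>2 \<le> \<sigma>\<^sup>2"
    using assms(1) \<tau>_sq by (auto simp: \<sigma>_def n_def divide_right_mono intro: order_trans)
  then have "\<tau> \<le> \<sigma>"
    by (simp add: abs_le_square_iff[symmetric] abs_le_iff)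
  have "ctsg_sample_law m r hist a t = density lborel (normal_density 0 \<sigma>)"
    using assms(7,12) by (simp add: ctsg_sample_law_zero_reward \<sigma>_def n_def)
  then show ?thesis
    using measure_normal_density_atLeast_ge[OF \<open>0 < \<sigma>\<close> \<open>\<tau> \<le> \<sigma>\<close>] by simp
qed

end
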